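(* Assume the setting below (in particular $\gcd(a,d)=1$), and let $(x_0,y_0)\in L$ be the point with $\varphi(x_0,y_0)=g(\mathcal{S})+a$. If $(x_0,y_0)=(s_v-s_{v+1}-1,\,P_{v+1}-1)$, then (a1) $\varphi(x,y)+\varphi(x_0-x,y_0-y)\equiv\varphi(x_0,y_0)\pmod a$ for all integers $0\le x\le x_0$, $0\le y\le y_0$; (a2) $\varphi(x,y)+\varphi(x_0+s_v-x,\,y_0-P_v-y)\equiv\varphi(x_0,y_0)\pmod a$ for all integers $x_0<x\le s_v-1$, $0\le y\le y_0-P_v$. If $(x_0,y_0)=(s_v-1,\,P_{v+1}-P_v-1)$, then (b1) $\varphi(x,y)+\varphi(x_0-x,y_0-y)\equiv\varphi(x_0,y_0)\pmod a$ for all integers $0\le x\le x_0$, $0\le y\le y_0$; (b2) $\varphi(x,y)+\varphi(x_0-s_{v+1}-x,\,y_0+P_{v+1}-y)\equiv\varphi(x_0,y_0)\pmod a$ for all integers $0\le x\le x_0-s_{v+1}$, $y_0<y\le y_0+P_{v+1}$.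
   Context: Setting (AA-semigroups). Let $a,d,k,c$ be positive integers with $\gcd(a,a+d,\ldots,a+kd,c)=1$ and $\gcd(a,d)=1$, and let $\mathcal{S}=\langle a,a+d,\ldots,a+kd,c\rangle$ be the numerical semigroup of non-negative integer combinations of these generators; $g(\mathcal{S})$ is its Frobenius number (largest integer not in $\mathcal{S}$). Put $s_{-1}=a$ and let $s_0$ be the unique integer with $ds_0\equiv c\pmod a$, $0\le s_0<a$. If $s_0=0$ set $m=-1$. Otherwise define $q_{i+1},s_{i+1}$ for $i=0,1,2,\ldots$ by $s_{i-1}=q_{i+1}s_i-s_{i+1}$ with $0\le s_{i+1}<s_i$, and let $m$ be the index with $s_m>0=s_{m+1}$ (so $s_m=\gcd(a,c)$). Define $P_{-1}=0$, $P_0=1$, $P_{i+1}=q_{i+1}P_i-P_{i-1}$ for $i=0,\ldots,m$, and $R_i=\frac1a\big((a+kd)s_i-kcP_i\big)$ for $-1\le i\le m+1$; these are integers with $-c/s_m=R_{m+1}<R_m<\cdots<R_0<R_{-1}=a+kd$. Let $v$ be the unique integer with $R_{v+1}\le0<R_v$. Let $L=A\cup B$, where $A=\{(x,y)\in\mathbb{Z}^2:0\le x\le s_v-1,\ 0\le y\le P_{v+1}-P_v-1\}$ and $B=\{(x,y)\in\mathbb{Z}^2:0\le x\le s_v-s_{v+1}-1,\ P_{v+1}-P_v\le y\le P_{v+1}-1\}$. Define $\varphi:\mathbb{Z}^2\to\mathbb{Z}$, $\varphi(x,y)=\lceil x/k\rceil a+xd+yc$. It is known (Rødseth) that $|L|=a$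 and $\varphi$ maps $L$ bijectively onto $\mathrm{Ap}(\mathcal{S};a)=\{s\in\mathcal{S}:s-a\notin\mathcal{S}\}$; consequently $g(\mathcal{S})+a=\max\varphi(L)$ is attained at $(s_v-s_{v+1}-1,P_{v+1}-1)$ or at $(s_v-1,P_{v+1}-P_v-1)$. *)

theory Defs
  imports "HOL-Number_Theory.Number_Theory"
begin

definition AAsg :: "int \<Rightarrow> int \<Rightarrow> int \<Rightarrow> int \<Rightarrow> int set" where
  "AAsg a d k c = {n. \<exists>u :: int \<Rightarrow> int. \<exists>w :: int.
      (\<forall>j. u j \<ge> 0) \<and> w \<ge> 0 \<and> n = (\<Sum>j\<in>{0..k}. u j * (a + j * d)) + w * c}"

definition frob :: "int set \<Rightarrow> int" where
  "frob S = (GREATEST n. n \<notin> S)"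

definition s0 :: "int \<Rightarrow> int \<Rightarrow> int \<Rightarrow> int" where
  "s0 a d c = (THE s. 0 \<le> s \<and> s < a \<and> [d * s = c] (mod a))"

text \<open>Shifted index: sS a d c j = s_(j-1); so sS 0 = s_(-1) = a, sS 1 = s_0.
  The recursion s_(i-1) = q_(i+1) s_i - s_(i+1), 0 <= s_(i+1) < s_i gives
  s_(i+1) = (- s_(i-1)) mod s_i (and we stop at 0).\<close>
fun sS :: "int \<Rightarrow> int \<Rightarrow> int \<Rightarrow> nat \<Rightarrow> int" where
  "sS a d c 0 = a"
| "sS a d c (Suc 0) = s0 a d c"
| "sS a d c (Suc (Suc n)) =
     (if sS a d c (Suc n) = 0 then 0 else (- sS a d c n) mod sS a d c (Suc n))"

text \<open>qS a d c i = q_(i+1) = ceiling (s_(i-1) / s_i).\<close>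
definition qS :: "int \<Rightarrow> int \<Rightarrow> int \<Rightarrow> nat \<Rightarrow> int" where
  "qS a d c i = \<lceil>real_of_int (sS a d c i) / real_of_int (sS a d c (Suc i))\<rceil>"

text \<open>Shifted index: PP a d c j = P_(j-1); P_(-1) = 0, P_0 = 1,
  P_(i+1) = q_(i+1) P_i - P_(i-1).\<close>
fun PP :: "int \<Rightarrow> int \<Rightarrow> int \<Rightarrow> nat \<Rightarrow> int" where
  "PP a d c 0 = 0"
| "PP a d c (Suc 0) = 1"
| "PP a d c (Suc (Suc n)) = qS a d c n * PP a d c (Suc n) - PP a d c n"

text \<open>Shifted index: RR a d k c j = R_(j-1) = ((a+kd) s_(j-1) - k c P_(j-1)) / a
  (an exact division).\<close>
definition RR :: "int \<Rightarrow> int \<Rightarrow> int \<Rightarrow> int \<Rightarrow> nat \<Rightarrow> int" where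
  "RR a d k c j = ((a + k * d) * sS a d c j - k * c * PP a d c j) div a"

text \<open>NN = (m+1)+1, the shifted index of s_(m+1) = 0 (first zero term after s_(-1)).\<close>
definition NN :: "int \<Rightarrow> int \<Rightarrow> int \<Rightarrow> nat" where
  "NN a d c = (LEAST j. 0 < j \<and> sS a d c j = 0)"

text \<open>vS = v+1, where v in {-1..m} is the unique index with R_(v+1) <= 0 < R_v.\<close>
definition vS :: "int \<Rightarrow> int \<Rightarrow> int \<Rightarrow> int \<Rightarrow> nat" where
  "vS a d k c = (THE w. w < NN a d c \<and> RR a d k c (Suc w) \<le> 0 \<and> 0 < RR a d k c w)"

definition phi :: "int \<Rightarrow> int \<Rightarrow> int \<Rightarrow> int \<Rightarrow> int \<Rightarrow> int \<Rightarrow> int" where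
  "phi a d k c x y = \<lceil>real_of_int x / real_of_int k\<rceil> * a + x * d + y * c"

definition Lset :: "int \<Rightarrow> int \<Rightarrow> int \<Rightarrow> int \<Rightarrow> (int \<times> int) set" where
  "Lset a d k c =
    (let w = vS a d k c; sv = sS a d c w; sv1 = sS a d c (Suc w);
         Pv = PP a d c w; Pv1 = PP a d c (Suc w) in
     {(x, y). 0 \<le> x \<and> x \<le> sv - 1 \<and> 0 \<le> y \<and> y \<le> Pv1 - Pv - 1}
     \<union> {(x, y). 0 \<le> x \<and> x \<le> sv - sv1 - 1 \<and> Pv1 - Pv \<le> y \<and> y \<le> Pv1 - 1})"

end

theory Submission
  imports Defs
begin

text \<open>Modulo a, phi(x, y) is just x d + y c, so each claimed congruence reduces to
  e d \<equiv> f c (mod a) for the shift (e, f) of the complementary point: (0, 0) in (a1) and (b1),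
  (s_v, P_v) in (a2), (-s_(v+1), -P_(v+1)) in (b2). These follow from the invariant
  d s_i \<equiv> c P_i (mod a), which holds for s_0 by its definition and propagates along the
  common recursions of s_i and P_i. Only gcd(a, d) = 1 is needed; the hypotheses on L and on
  the Frobenius number merely single out the two cases.\<close>

lemma s0_characterization:
  fixes a d c :: int
  assumes "0 < a" "gcd a d = 1"
  shows "0 \<le> s0 a d c \<and> s0 a d c < a \<and> [d * s0 a d c = c] (mod a)"
proof -
  have cop: "coprime d a" using assms(2) by (simp add: coprime_iff_gcd_eq_1 gcd.commute)
  obtain u where u: "[d * u = 1] (mod a)" using cong_solve_coprime_int[OF cop] by blast
  define s where "s = (u * c) mod a"
  have s: "0 \<le> s \<and> s < a \<and> [d * s = c] (mod a)"
  proof -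
    have "[d * s = d * (u * c)] (mod a)" unfolding s_def
      by (simp add: cong_def mod_mult_right_eq)
    also have "[d * (u * c) = 1 * c] (mod a)"
      using cong_mult[OF u cong_refl[of c]] by (simp add: mult.assoc)
    finally have "[d * s = c] (mod a)" by simp
    thus ?thesis using assms(1) by (simp add: s_def)
  qed
  have unique: "t = s" if "0 \<le> t \<and> t < a \<and> [d * t = c] (mod a)" for t
  proof -
    have "[d * t = d * s] (mod a)" using that s by (meson cong_sym cong_trans)
    hence "[t = s] (mod a)" using cop cong_mult_lcancel by blast
    thus ?thesis using that s cong_less_imp_eq_int by blast
  qed
  have "s0 a d c = s" unfolding s0_def by (rule the_equality) (use s unique in blast)+
  thus ?thesis using s by simp
qed

lemma sS_nonneg:
  assumes "0 < a" "gcd a d = 1"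
  shows "0 \<le> sS a d c n"
proof (induction n rule: less_induct)
  case (less n)
  consider "n = 0" | "n = Suc 0" | m where "n = Suc (Suc m)" by (metis not0_implies_Suc)
  then show ?case
  proof cases
    case 3
    with less have "0 \<le> sS a d c (Suc m)" by simp
    with 3 show ?thesis by (auto simp: order_le_neq_trans)
  qed (use assms s0_characterization[OF assms, of c] in auto)
qed

lemma sS_nonzero_if_Suc_nonzero:
  assumes "a \<noteq> 0" "sS a d c (Suc n) \<noteq> 0"
  shows "sS a d c n \<noteq> 0"
  using assms by (cases n) auto

lemma minus_mod_eq_ceiling_mult_sub:
  fixes x y :: int
  assumes "0 < y"
  shows "(- x) mod y = \<lceil>real_of_int x / real_of_int y\<rceil> * y - x"
proof -
  have "\<lceil>real_of_int x / real_of_int y\<rceil> = - \<lfloor>real_of_int (- x) / real_of_int y\<rfloor>"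
    by (simp add: ceiling_def)
  hence ceiling_eq: "\<lceil>real_of_int x / real_of_int y\<rceil> = - ((- x) div y)"
    by (simp only: floor_divide_of_int_eq)
  have mod_eq: "(- x) mod y = - x - (- x) div y * y"
    using div_mult_mod_eq[of "- x" y] by linarith
  show ?thesis unfolding ceiling_eq mod_eq by (simp add: algebra_simps)
qed

lemma sS_recurrence:
  assumes "0 < a" "gcd a d = 1" "sS a d c (Suc n) \<noteq> 0"
  shows "sS a d c (Suc (Suc n)) = qS a d c n * sS a d c (Suc n) - sS a d c n"
proof -
  have "0 < sS a d c (Suc n)" using assms(3) sS_nonneg[OF assms(1,2)] by (simp add: order_le_neq_trans)
  thus ?thesis using assms(3) minus_mod_eq_ceiling_mult_sub by (simp add: qS_def)
qed

lemma d_sS_cong_c_PP: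
  assumes "0 < a" "gcd a d = 1" "sS a d c n \<noteq> 0"
  shows "[d * sS a d c n = c * PP a d c n] (mod a)
       \<and> [d * sS a d c (Suc n) = c * PP a d c (Suc n)] (mod a)"
  using assms(3)
proof (induction n)
  case 0
  have "[d * sS a d c 0 = c * PP a d c 0] (mod a)" by (simp add: cong_def)
  then show ?case using s0_characterization[OF assms(1,2), of c] by simp
next
  case (Suc n)
  from Suc.IH[OF sS_nonzero_if_Suc_nonzero[OF _ Suc.prems]] assms(1)
  have i0: "[d * sS a d c n = c * PP a d c n] (mod a)"
    and i1: "[d * sS a d c (Suc n) = c * PP a d c (Suc n)] (mod a)" by auto
  have "d * sS a d c (Suc (Suc n)) = qS a d c n * (d * sS a d c (Suc n)) - d * sS a d c n"
    unfolding sS_recurrence[OF assms(1,2) Suc.prems] by (simp add: algebra_simps)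
  also have "[\<dots> = qS a d c n * (c * PP a d c (Suc n)) - c * PP a d c n] (mod a)"
    by (intro cong_diff cong_mult cong_refl i0 i1)
  also have "qS a d c n * (c * PP a d c (Suc n)) - c * PP a d c n = c * PP a d c (Suc (Suc n))"
    by (simp add: algebra_simps)
  finally show ?case using i1 by simp
qed

lemma phi_cong_linear: "[phi a d k c x y = x * d + y * c] (mod a)"
  unfolding phi_def cong_def by (simp add: add.assoc)

lemma phi_complement_cong:
  assumes "[e * d = f * c] (mod a)"
  shows "[phi a d k c x y + phi a d k c (x0 + e - x) (y0 - f - y) = phi a d k c x0 y0] (mod a)"
proof -
  have "[phi a d k c x y + phi a d k c (x0 + e - x) (y0 - f - y)
       = x * d + y * c + ((x0 + e - x) * d + (y0 - f - y) * c)] (mod a)"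
    by (intro cong_add phi_cong_linear)
  also have "x * d + y * c + ((x0 + e - x) * d + (y0 - f - y) * c)
      = (x0 * d + y0 * c) + (e * d - f * c)" by (simp add: algebra_simps)
  also have "[\<dots> = (x0 * d + y0 * c) + 0] (mod a)"
    using assms by (intro cong_add cong_refl) (simp add: cong_diff_iff_cong_0)
  also have "[x0 * d + y0 * c + 0 = phi a d k c x0 y0] (mod a)"
    using cong_sym[OF phi_cong_linear] by simp
  finally show ?thesis .
qed

theorem lemma4:
  fixes a d k c x0 y0 :: int
  assumes pos: "0 < a" "0 < d" "0 < k" "0 < c"
    and gcd_all: "Gcd ({a + j * d | j. 0 \<le> j \<and> j \<le> k} \<union> {c}) = 1"
    and gcd_ad: "gcd a d = 1"
    and inL: "(x0, y0) \<in> Lset a d k c"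
    and frob: "phi a d k c x0 y0 = frob (AAsg a d k c) + a"
  shows
   "(let w = vS a d k c; sv = sS a d c w; sv1 = sS a d c (Suc w);
         Pv = PP a d c w; Pv1 = PP a d c (Suc w) in
     ((x0, y0) = (sv - sv1 - 1, Pv1 - 1) \<longrightarrow>
        (\<forall>x y. 0 \<le> x \<and> x \<le> x0 \<and> 0 \<le> y \<and> y \<le> y0 \<longrightarrow>
           [phi a d k c x y + phi a d k c (x0 - x) (y0 - y) = phi a d k c x0 y0] (mod a))
      \<and> (\<forall>x y. x0 < x \<and> x \<le> sv - 1 \<and> 0 \<le> y \<and> y \<le> y0 - Pv \<longrightarrow>
           [phi a d k c x y + phi a d k c (x0 + sv - x) (y0 - Pv - y) = phi a d k c x0 y0] (mod a)))
   \<and> ((x0, y0) = (sv - 1, Pv1 - Pv - 1) \<longrightarrow>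
        (\<forall>x y. 0 \<le> x \<and> x \<le> x0 \<and> 0 \<le> y \<and> y \<le> y0 \<longrightarrow>
           [phi a d k c x y + phi a d k c (x0 - x) (y0 - y) = phi a d k c x0 y0] (mod a))
      \<and> (\<forall>x y. 0 \<le> x \<and> x \<le> x0 - sv1 \<and> y0 < y \<and> y \<le> y0 + Pv1 \<longrightarrow>
           [phi a d k c x y + phi a d k c (x0 - sv1 - x) (y0 + Pv1 - y) = phi a d k c x0 y0] (mod a))))"
proof -
  define w where "w = vS a d k c"
  note invariant = d_sS_cong_c_PP[OF pos(1) gcd_ad, of c w]
  have symmetric: "[phi a d k c x y + phi a d k c (x0 - x) (y0 - y) = phi a d k c x0 y0] (mod a)"
    for x y using phi_complement_cong[of 0 d 0 c a k x y x0 y0] by simp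
  have shift_a2: "[phi a d k c x y + phi a d k c (x0 + sS a d c w - x) (y0 - PP a d c w - y)
      = phi a d k c x0 y0] (mod a)"
    if "x0 = sS a d c w - sS a d c (Suc w) - 1" "x0 < x" "x \<le> sS a d c w - 1" for x y
  proof -
    have "sS a d c (Suc w) \<noteq> 0" using that by linarith
    hence "sS a d c w \<noteq> 0" by (rule sS_nonzero_if_Suc_nonzero[rotated]) (use pos(1) in linarith)
    with invariant show ?thesis by (intro phi_complement_cong) (simp add: mult.commute)
  qed
  have shift_b2: "[phi a d k c x y + phi a d k c (x0 - sS a d c (Suc w) - x) (y0 + PP a d c (Suc w) - y)
      = phi a d k c x0 y0] (mod a)"
    if "x0 = sS a d c w - 1" "0 \<le> x" "x \<le> x0 - sS a d c (Suc w)" for x y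
  proof -
    have "sS a d c w \<noteq> 0" using that sS_nonneg[OF pos(1) gcd_ad, of c "Suc w"] by linarith
    with invariant have "[(- sS a d c (Suc w)) * d = (- PP a d c (Suc w)) * c] (mod a)"
      by (simp add: mult.commute cong_minus_minus_iff)
    from phi_complement_cong[OF this, of k x y x0 y0] show ?thesis by simp
  qed
  show ?thesis
    unfolding Let_def w_def[symmetric] using symmetric shift_a2 shift_b2 by auto
qed

end
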